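(* Let $l>0$, $h=ld^{-1/2}$, and let the RWM chains $(X_t,Y_t)$ targeting $\mathcal{N}_d(0,I_d)$ be coupled by the CRN, reflection or GCRN coupling. Let $W_{t/d}=\frac1d(\lVert X_t\rVert^2,\lVert Y_t\rVert^2,X_t^\top Y_t)$. For all $X,Y>0$, $$\limsup_{d\to\infty}\ \sup_{w\in\mathcal{S}(X,Y)}\ \mathbb{E}\Big\{\lVert W_{(t+1)/d}-W_{t/d}\rVert^2\ \Big|\ W_{t/d}=w\Big\}d^2<\infty.$$
   Context: RWM chains: $X_{t+1}=X_t+hZ_xB_x$, $Y_{t+1}=Y_t+hZ_yB_y$ with $B_x=\mathbb{1}\{U_x\le\exp(-hX_t^\top Z_x-h^2\lVert Z_x\rVert^2/2)\}$, analogously $B_y$; marginally $Z_x,Z_y\sim\mathcal{N}_d(0,I_d)$, $U_x,U_y\sim\mathrm{Unif}(0,1)$ independent of the respective noise. All three couplings set $U_y=U_x$. With $n_x=-X_t/\lVert X_t\rVert$, $n_y=-Y_t/\lVert Y_t\rVert$: CRN: $Z_y=Z_x$; reflection: $Z_y=Z_x-2(e^\top Z_x)e$, $e=(X_t-Y_t)/\lVert X_t-Y_t\rVert$; GCRN: $Z_x=Z-(n_x^\top Z)n_x+Z_1n_x$, $Z_y=Z-(n_y^\top Z)n_y+Z_1n_y$ with $Z\sim\mathcal{N}_d(0,I_d)$, $Z_1\sim\mathcal{N}(0,1)$ independent. $\mathcal{S}(X,Y)=\{(x,y,v):x\in[0,X],y\in[0,Y],|v|\le\sqrt{xy}\}$.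 *)

theory Defs
  imports "HOL-Probability.Probability"
begin

text \<open>Vectors of R^d are represented as functions nat => real; only indices i < d matter.\<close>

definition ipd :: "nat \<Rightarrow> (nat \<Rightarrow> real) \<Rightarrow> (nat \<Rightarrow> real) \<Rightarrow> real" where
  "ipd d x y = (\<Sum>i<d. x i * y i)"

definition sqd :: "nat \<Rightarrow> (nat \<Rightarrow> real) \<Rightarrow> real" where
  "sqd d x = ipd d x x"

text \<open>Normalisation v / norm v, with the convention 0 / 0 = 0.\<close>
definition unitd :: "nat \<Rightarrow> (nat \<Rightarrow> real) \<Rightarrow> (nat \<Rightarrow> real)" where
  "unitd d v = (\<lambda>i. v i / sqrt (sqd d v))"

datatype coupling = CRN | Reflection | GCRN

text \<open>The pair of proposal noises (Z_x, Z_y) produced by the coupling at state (x, y)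
  from the driving noise z ~ N_d(0, I_d) and z1 ~ N(0,1).\<close>
fun noises :: "coupling \<Rightarrow> nat \<Rightarrow> (nat \<Rightarrow> real) \<Rightarrow> (nat \<Rightarrow> real) \<Rightarrow> (nat \<Rightarrow> real) \<Rightarrow> real
     \<Rightarrow> (nat \<Rightarrow> real) \<times> (nat \<Rightarrow> real)" where
  "noises CRN d x y z z1 = (z, z)"
| "noises Reflection d x y z z1 =
     (let e = unitd d (\<lambda>i. x i - y i) in (z, \<lambda>i. z i - 2 * ipd d e z * e i))"
| "noises GCRN d x y z z1 =
     (let nx = unitd d (\<lambda>i. - x i); ny = unitd d (\<lambda>i. - y i) in
      (\<lambda>i. z i - ipd d nx z * nx i + z1 * nx i, \<lambda>i. z i - ipd d ny z * ny i + z1 * ny i))"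

text \<open>One RWM step targeting N_d(0, I_d) with step size h, noise z and uniform u.\<close>
definition rwm_step :: "real \<Rightarrow> nat \<Rightarrow> (nat \<Rightarrow> real) \<Rightarrow> (nat \<Rightarrow> real) \<Rightarrow> real \<Rightarrow> (nat \<Rightarrow> real)" where
  "rwm_step h d x z u =
     (if u \<le> exp (- h * ipd d x z - h\<^sup>2 * sqd d z / 2) then (\<lambda>i. x i + h * z i) else x)"

definition Wstat :: "nat \<Rightarrow> (nat \<Rightarrow> real) \<Rightarrow> (nat \<Rightarrow> real) \<Rightarrow> real \<times> real \<times> real" where
  "Wstat d x y = (sqd d x / real d, sqd d y / real d, ipd d x y / real d)"

definition sqdist3 :: "real \<times> real \<times> real \<Rightarrow> real \<times> real \<times> real \<Rightarrow> real" where
  "sqdist3 a b = (fst a - fst b)\<^sup>2 + (fst (snd a) - fst (snd b))\<^sup>2 + (snd (snd a) - snd (snd b))\<^sup>2"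

definition Sset :: "real \<Rightarrow> real \<Rightarrow> (real \<times> real \<times> real) set" where
  "Sset X Y = {(a, b, v). 0 \<le> a \<and> a \<le> X \<and> 0 \<le> b \<and> b \<le> Y \<and> \<bar>v\<bar> \<le> sqrt (a * b)}"

text \<open>Law of the driving randomness (Z, Z_1, U): Z ~ N_d(0,I_d), Z_1 ~ N(0,1), U ~ Unif(0,1),
  independent. The coupling uses U_y = U_x = U.\<close>
definition noise_measure :: "nat \<Rightarrow> ((nat \<Rightarrow> real) \<times> real \<times> real) measure" where
  "noise_measure d =
     PiM {..<d} (\<lambda>_. density lborel std_normal_density) \<Otimes>\<^sub>M
     (density lborel std_normal_density \<Otimes>\<^sub>M uniform_measure lborel {0..1})"

definition W_incr_sq :: "coupling \<Rightarrow> real \<Rightarrow> nat \<Rightarrow> (nat \<Rightarrow> real) \<Rightarrow> (nat \<Rightarrow> real)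
     \<Rightarrow> (nat \<Rightarrow> real) \<times> real \<times> real \<Rightarrow> real" where
  "W_incr_sq c h d x y \<omega> =
     (case \<omega> of (z, z1, u) \<Rightarrow>
       (let (zx, zy) = noises c d x y z z1 in
        sqdist3 (Wstat d (rwm_step h d x zx u) (rwm_step h d y zy u)) (Wstat d x y)))"

text \<open>E{ ||W_{(t+1)/d} - W_{t/d}||^2 | (X_t, Y_t) = (x, y) } with h = l d^{-1/2}.\<close>
definition cond_incr :: "coupling \<Rightarrow> real \<Rightarrow> nat \<Rightarrow> (nat \<Rightarrow> real) \<Rightarrow> (nat \<Rightarrow> real) \<Rightarrow> ennreal" where
  "cond_incr c l d x y =
     (\<integral>\<^sup>+ \<omega>. ennreal (W_incr_sq c (l / sqrt (real d)) d x y \<omega>) \<partial>noise_measure d)"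

end

theory Submission
  imports Defs
begin

text \<open>
  Let s_x, s_y \<in> {0, h} be the lengths of the two accepted moves. Then d times the one-step
  increment of W has the coordinates 2 s_x <x,Z_x> + s_x^2 |Z_x|^2, 2 s_y <y,Z_y> + s_y^2 |Z_y|^2
  and s_y <x,Z_y> + s_x <y,Z_x> + s_x s_y <Z_x,Z_y>, so d^2 times its squared norm is at most
  8 h^2 times the sum of the squared projections <a,Z_x>^2, <a,Z_y>^2 (a = x, y) plus
  4 h^4 (|Z_x|^4 + |Z_y|^4).
  In all three couplings each proposal noise has the form H Z + s Z_1 e, where H = I - k e e^T
  is a self-adjoint contraction (k = 0 for CRN, k = 2 for the reflection, k = 1 for GCRN) and
  |s e| <= 1. Hence E <a,Z_x>^2 <= 4 |a|^2 and E |Z_x|^4 = O(d^2). As h^2 = l^2/d, and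
  |x|^2 <= X d, |y|^2 <= Y d on S(X,Y), this gives
  d^2 E |W_{(t+1)/d} - W_{t/d}|^2 <= 64 l^2 (X + Y) + 384 l^4 for every d.
\<close>

lemma ipd_commute: "ipd d a b = ipd d b a"
  by (simp add: ipd_def mult.commute)

lemma ipd_add_left: "ipd d (\<lambda>i. f i + g i) c = ipd d f c + ipd d g c"
  by (simp add: ipd_def algebra_simps sum.distrib)

lemma ipd_diff_left: "ipd d (\<lambda>i. f i - g i) c = ipd d f c - ipd d g c"
  by (simp add: ipd_def algebra_simps sum_subtractf)

lemma ipd_scale_left: "ipd d (\<lambda>i. s * f i) c = s * ipd d f c"
  by (simp add: ipd_def algebra_simps sum_distrib_left)

lemma ipd_add_right: "ipd d c (\<lambda>i. f i + g i) = ipd d c f + ipd d c g"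
  by (simp add: ipd_def algebra_simps sum.distrib)

lemma ipd_diff_right: "ipd d c (\<lambda>i. f i - g i) = ipd d c f - ipd d c g"
  by (simp add: ipd_def algebra_simps sum_subtractf)

lemma ipd_scale_right: "ipd d c (\<lambda>i. s * f i) = s * ipd d c f"
  by (simp add: ipd_def algebra_simps sum_distrib_left)

lemmas ipd_linear =
  ipd_add_left ipd_diff_left ipd_scale_left ipd_add_right ipd_diff_right ipd_scale_right

lemma sqd_nonneg: "0 \<le> sqd d a"
  by (simp add: sqd_def ipd_def sum_nonneg)

lemma ipd_sq_le_sqd_mult: "(ipd d a b)\<^sup>2 \<le> sqd d a * sqd d b"
  using Cauchy_Schwarz_ineq_sum[of a b "{..<d}"]
  by (simp add: sqd_def ipd_def power2_eq_square)

lemma sqd_scale: "sqd d (\<lambda>i. s * v i) = s\<^sup>2 * sqd d v"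
  by (simp add: sqd_def ipd_linear power2_eq_square)

lemma sqd_shift: "sqd d (\<lambda>i. x i + t * z i) = sqd d x + 2 * t * ipd d x z + t\<^sup>2 * sqd d z"
  by (simp add: sqd_def ipd_linear ipd_commute[of d z x] power2_eq_square algebra_simps)

lemma ipd_shift:
  "ipd d (\<lambda>i. x i + s * x' i) (\<lambda>i. y i + t * y' i) =
     ipd d x y + t * ipd d x y' + s * ipd d x' y + s * t * ipd d x' y'"
  by (simp add: ipd_linear algebra_simps)

lemma sq_add_le: "((u::real) + v)\<^sup>2 \<le> 2 * u\<^sup>2 + 2 * v\<^sup>2"
proof -
  have "0 \<le> (u - v)\<^sup>2" by simp
  then show ?thesis by (simp add: power2_eq_square algebra_simps)
qed

lemma sq_add3_le: "((u::real) + v + w)\<^sup>2 \<le> 3 * u\<^sup>2 + 3 * v\<^sup>2 + 3 * w\<^sup>2"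
proof -
  have "0 \<le> (u - v)\<^sup>2 + (v - w)\<^sup>2 + (u - w)\<^sup>2" by simp
  then show ?thesis by (simp add: power2_eq_square algebra_simps)
qed

lemma sqd_add_le: "sqd d (\<lambda>i. u i + v i) \<le> 2 * sqd d u + 2 * sqd d v"
proof -
  have "sqd d (\<lambda>i. u i + v i) = (\<Sum>i<d. (u i + v i)\<^sup>2)"
    by (simp add: sqd_def ipd_def power2_eq_square)
  also have "\<dots> \<le> (\<Sum>i<d. 2 * (u i)\<^sup>2 + 2 * (v i)\<^sup>2)"
    by (intro sum_mono sq_add_le)
  also have "\<dots> = 2 * sqd d u + 2 * sqd d v"
    by (simp add: sqd_def ipd_def power2_eq_square sum.distrib sum_distrib_left)
  finally show ?thesis .
qed

lemma sqd_unitd_le: "sqd d (unitd d v) \<le> 1"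
proof -
  have "sqd d (unitd d v) = sqd d v / (sqrt (sqd d v))\<^sup>2"
    by (simp add: sqd_def ipd_def unitd_def sum_divide_distrib power2_eq_square)
  also have "\<dots> = sqd d v / sqd d v"
    by (simp add: sqd_nonneg)
  also have "\<dots> \<le> 1"
    by (cases "sqd d v = 0") auto
  finally show ?thesis .
qed

section \<open>Contractive proposal noises\<close>

definition householder :: "nat \<Rightarrow> real \<Rightarrow> (nat \<Rightarrow> real) \<Rightarrow> (nat \<Rightarrow> real) \<Rightarrow> (nat \<Rightarrow> real)" where
  "householder d k e z = (\<lambda>i. z i - k * ipd d e z * e i)"

lemma ipd_householder_right: "ipd d a (householder d k e z) = ipd d (householder d k e a) z"
  unfolding householder_def
  by (simp only: ipd_linear) (simp add: ipd_commute[of d e] ipd_commute[of d a z])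

lemma sqd_householder:
  "sqd d (householder d k e a) = sqd d a - k * (2 - k * sqd d e) * (ipd d a e)\<^sup>2"
  unfolding householder_def sqd_def
  by (simp only: ipd_linear) (simp add: ipd_commute[of d e a] power2_eq_square algebra_simps)

lemma sqd_householder_le:
  assumes "0 \<le> k" and "k * sqd d e \<le> 2"
  shows "sqd d (householder d k e a) \<le> sqd d a"
  unfolding sqd_householder using assms by simp

definition contractive_noise :: "nat \<Rightarrow> ((nat \<Rightarrow> real) \<Rightarrow> real \<Rightarrow> (nat \<Rightarrow> real)) \<Rightarrow> bool" where
  "contractive_noise d N \<longleftrightarrow> (\<exists>k s e. 0 \<le> k \<and> k \<le> 2 \<and> s\<^sup>2 \<le> 1 \<and> sqd d e \<le> 1 \<and>
     (\<forall>z z1. N z z1 = (\<lambda>i. householder d k e z i + s * z1 * e i)))"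

lemma contractive_noiseI:
  assumes "0 \<le> k" "k \<le> 2" "s\<^sup>2 \<le> 1" "sqd d e \<le> 1"
    and "\<And>z z1. N z z1 = (\<lambda>i. householder d k e z i + s * z1 * e i)"
  shows "contractive_noise d N"
  unfolding contractive_noise_def using assms by blast

lemma contractive_noise_id: "contractive_noise d (\<lambda>z z1. z)"
  by (rule contractive_noiseI[where k = 0 and s = 0 and e = "\<lambda>_. 0"])
    (auto simp: householder_def sqd_def ipd_def)

lemma contractive_noises:
  "contractive_noise d (\<lambda>z z1. fst (noises c d x y z z1))"
  "contractive_noise d (\<lambda>z z1. snd (noises c d x y z z1))"
proof -
  have gcrn: "contractive_noise d (\<lambda>z z1 i. z i - ipd d (unitd d v) z * unitd d v i + z1 * unitd d v i)"
    for v
    by (rule contractive_noiseI[where k = 1 and s = 1]) (auto simp: householder_def sqd_unitd_le)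
  have reflection: "contractive_noise d (\<lambda>z z1 i. z i - 2 * ipd d (unitd d v) z * unitd d v i)" for v
    by (rule contractive_noiseI[where k = 2 and s = 0]) (auto simp: householder_def sqd_unitd_le)
  show "contractive_noise d (\<lambda>z z1. fst (noises c d x y z z1))"
    using contractive_noise_id gcrn by (cases c) (simp_all add: Let_def)
  show "contractive_noise d (\<lambda>z z1. snd (noises c d x y z z1))"
    using contractive_noise_id gcrn reflection by (cases c) (simp_all add: Let_def)
qed

lemma contractive_noiseE:
  assumes "contractive_noise d N"
  obtains k s e where "s\<^sup>2 \<le> 1" and "sqd d e \<le> 1"
    and "\<And>a. sqd d (householder d k e a) \<le> sqd d a"
    and "\<And>z z1. N z z1 = (\<lambda>i. householder d k e z i + s * z1 * e i)"
proof -
  obtain k s e where k: "0 \<le> k" "k \<le> 2" and s: "s\<^sup>2 \<le> 1" and e: "sqd d e \<le> 1"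
    and N: "\<And>z z1. N z z1 = (\<lambda>i. householder d k e z i + s * z1 * e i)"
    using assms unfolding contractive_noise_def by blast
  have "k * sqd d e \<le> 2"
    using k e mult_mono[of k 2 "sqd d e" 1] by (simp add: sqd_nonneg)
  with k(1) have "sqd d (householder d k e a) \<le> sqd d a" for a
    by (rule sqd_householder_le)
  with s e N show ?thesis
    using that by blast
qed

lemma contractive_noise_sqd_le:
  assumes "contractive_noise d N"
  shows "sqd d (N z z1) \<le> 2 * sqd d z + 2 * z1\<^sup>2"
proof -
  obtain k s e where s: "s\<^sup>2 \<le> 1" and e: "sqd d e \<le> 1"
    and H: "sqd d (householder d k e z) \<le> sqd d z"
    and N: "N z z1 = (\<lambda>i. householder d k e z i + s * z1 * e i)"
    using contractive_noiseE[OF assms] by metis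
  have "sqd d (\<lambda>i. s * z1 * e i) = s\<^sup>2 * z1\<^sup>2 * sqd d e"
    using sqd_scale[of d "s * z1" e] by (simp add: power_mult_distrib)
  also have "\<dots> \<le> z1\<^sup>2"
  proof -
    have "s\<^sup>2 * sqd d e \<le> 1"
      using s e mult_mono[of "s\<^sup>2" 1 "sqd d e" 1] by (simp add: sqd_nonneg)
    from mult_left_mono[OF this, of "z1\<^sup>2"] show ?thesis
      by (simp add: ac_simps)
  qed
  finally show ?thesis
    using N sqd_add_le[of d "householder d k e z" "\<lambda>i. s * z1 * e i"] H by simp
qed

lemma contractive_noise_sqd_sq_le:
  assumes "contractive_noise d N"
  shows "(sqd d (N z z1))\<^sup>2 \<le> 8 * (sqd d z)\<^sup>2 + 8 * z1 ^ 4"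
proof -
  have "(sqd d (N z z1))\<^sup>2 \<le> (2 * sqd d z + 2 * z1\<^sup>2)\<^sup>2"
    using contractive_noise_sqd_le[OF assms] by (intro power_mono) (auto simp: sqd_nonneg)
  also have "\<dots> \<le> 2 * (2 * sqd d z)\<^sup>2 + 2 * (2 * z1\<^sup>2)\<^sup>2"
    by (rule sq_add_le)
  finally show ?thesis
    by (simp add: power_mult_distrib flip: power_mult)
qed

lemma contractive_noise_ipd_sq_le:
  assumes "contractive_noise d N"
  obtains b where "sqd d b \<le> sqd d a"
    and "\<And>z z1. (ipd d a (N z z1))\<^sup>2 \<le> 2 * (ipd d b z)\<^sup>2 + 2 * sqd d a * z1\<^sup>2"
proof -
  obtain k s e where s: "s\<^sup>2 \<le> 1" and e: "sqd d e \<le> 1"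
    and H: "sqd d (householder d k e a) \<le> sqd d a"
    and N: "\<And>z z1. N z z1 = (\<lambda>i. householder d k e z i + s * z1 * e i)"
    using contractive_noiseE[OF assms] by metis
  have "(ipd d a (N z z1))\<^sup>2 \<le> 2 * (ipd d (householder d k e a) z)\<^sup>2 + 2 * sqd d a * z1\<^sup>2"
    for z z1
  proof -
    have "(ipd d a e)\<^sup>2 \<le> sqd d a"
      using ipd_sq_le_sqd_mult[of d a e] e mult_left_le[OF e sqd_nonneg[of d a]] by linarith
    then have "s\<^sup>2 * (ipd d a e)\<^sup>2 \<le> sqd d a"
      using s mult_mono[of "s\<^sup>2" 1 "(ipd d a e)\<^sup>2" "sqd d a"] by (simp add: sqd_nonneg)
    from mult_left_mono[OF this, of "z1\<^sup>2"]
    have "(s * z1 * ipd d a e)\<^sup>2 \<le> sqd d a * z1\<^sup>2"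
      by (simp add: power_mult_distrib ac_simps)
    moreover have "ipd d a (N z z1) = ipd d (householder d k e a) z + s * z1 * ipd d a e"
      by (simp add: N ipd_add_right ipd_scale_right ipd_householder_right)
    ultimately show ?thesis
      using sq_add_le[of "ipd d (householder d k e a) z" "s * z1 * ipd d a e"] by simp
  qed
  with H show ?thesis
    by (rule that)
qed

lemma noises_ipd_sq_le:
  obtains b1 b2 b3 b4 where "sqd d b1 + sqd d b2 + sqd d b3 + sqd d b4 \<le> 2 * (sqd d x + sqd d y)"
    and "\<And>z z1. (ipd d x (fst (noises c d x y z z1)))\<^sup>2 + (ipd d y (snd (noises c d x y z z1)))\<^sup>2 +
      (ipd d x (snd (noises c d x y z z1)))\<^sup>2 + (ipd d y (fst (noises c d x y z z1)))\<^sup>2 \<le>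
      2 * ((ipd d b1 z)\<^sup>2 + (ipd d b2 z)\<^sup>2 + (ipd d b3 z)\<^sup>2 + (ipd d b4 z)\<^sup>2) +
      4 * (sqd d x + sqd d y) * z1\<^sup>2"
proof -
  note Nx = contractive_noises(1)[of d c x y] and Ny = contractive_noises(2)[of d c x y]
  obtain b1 where b1: "sqd d b1 \<le> sqd d x"
    "\<And>z z1. (ipd d x (fst (noises c d x y z z1)))\<^sup>2 \<le> 2 * (ipd d b1 z)\<^sup>2 + 2 * sqd d x * z1\<^sup>2"
    using contractive_noise_ipd_sq_le[OF Nx, where a = x] by blast
  obtain b2 where b2: "sqd d b2 \<le> sqd d y"
    "\<And>z z1. (ipd d y (snd (noises c d x y z z1)))\<^sup>2 \<le> 2 * (ipd d b2 z)\<^sup>2 + 2 * sqd d y * z1\<^sup>2"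
    using contractive_noise_ipd_sq_le[OF Ny, where a = y] by blast
  obtain b3 where b3: "sqd d b3 \<le> sqd d x"
    "\<And>z z1. (ipd d x (snd (noises c d x y z z1)))\<^sup>2 \<le> 2 * (ipd d b3 z)\<^sup>2 + 2 * sqd d x * z1\<^sup>2"
    using contractive_noise_ipd_sq_le[OF Ny, where a = x] by blast
  obtain b4 where b4: "sqd d b4 \<le> sqd d y"
    "\<And>z z1. (ipd d y (fst (noises c d x y z z1)))\<^sup>2 \<le> 2 * (ipd d b4 z)\<^sup>2 + 2 * sqd d y * z1\<^sup>2"
    using contractive_noise_ipd_sq_le[OF Nx, where a = y] by blast
  show ?thesis
  proof (rule that[of b1 b2 b3 b4])
    show "sqd d b1 + sqd d b2 + sqd d b3 + sqd d b4 \<le> 2 * (sqd d x + sqd d y)"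
      using b1(1) b2(1) b3(1) b4(1) by simp
    show "(ipd d x (fst (noises c d x y z z1)))\<^sup>2 + (ipd d y (snd (noises c d x y z z1)))\<^sup>2 +
      (ipd d x (snd (noises c d x y z z1)))\<^sup>2 + (ipd d y (fst (noises c d x y z z1)))\<^sup>2 \<le>
      2 * ((ipd d b1 z)\<^sup>2 + (ipd d b2 z)\<^sup>2 + (ipd d b3 z)\<^sup>2 + (ipd d b4 z)\<^sup>2) +
      4 * (sqd d x + sqd d y) * z1\<^sup>2" for z z1
      using b1(2)[of z z1] b2(2)[of z z1] b3(2)[of z z1] b4(2)[of z z1] by (simp add: algebra_simps)
  qed
qed

lemma rwm_step_eq_shift:
  obtains t where "t\<^sup>2 \<le> h\<^sup>2" and "rwm_step h d x z u = (\<lambda>i. x i + t * z i)"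
proof (cases "u \<le> exp (- h * ipd d x z - h\<^sup>2 * sqd d z / 2)")
  case True
  then show ?thesis
    by (intro that[of h]) (simp_all add: rwm_step_def)
next
  case False
  then show ?thesis
    by (intro that[of 0]) (simp_all add: rwm_step_def)
qed

lemma W_incr_sq_eq_shift:
  fixes c :: coupling and d :: nat and x y z :: "nat \<Rightarrow> real" and z1 :: real
  defines "zx \<equiv> fst (noises c d x y z z1)" and "zy \<equiv> snd (noises c d x y z z1)"
  obtains s t where "s\<^sup>2 \<le> h\<^sup>2" and "t\<^sup>2 \<le> h\<^sup>2"
    and "W_incr_sq c h d x y (z, z1, u) =
      sqdist3 (Wstat d (\<lambda>i. x i + s * zx i) (\<lambda>i. y i + t * zy i)) (Wstat d x y)"
proof -
  obtain s where s: "s\<^sup>2 \<le> h\<^sup>2" and step_x: "rwm_step h d x zx u = (\<lambda>i. x i + s * zx i)"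
    using rwm_step_eq_shift .
  obtain t where t: "t\<^sup>2 \<le> h\<^sup>2" and step_y: "rwm_step h d y zy u = (\<lambda>i. y i + t * zy i)"
    using rwm_step_eq_shift .
  show ?thesis
    using step_x step_y by (intro that[OF s t]) (simp add: W_incr_sq_def zx_def zy_def case_prod_beta)
qed

lemma sqdist3_Wstat_shift:
  assumes "0 < d"
  shows "(real d)\<^sup>2 * sqdist3 (Wstat d (\<lambda>i. x i + s * zx i) (\<lambda>i. y i + t * zy i)) (Wstat d x y) =
    (2 * s * ipd d x zx + s\<^sup>2 * sqd d zx)\<^sup>2 + (2 * t * ipd d y zy + t\<^sup>2 * sqd d zy)\<^sup>2 +
    (t * ipd d x zy + s * ipd d y zx + s * t * ipd d zx zy)\<^sup>2"
proof -
  have "(real d)\<^sup>2 * (A / real d - B / real d)\<^sup>2 = (A - B)\<^sup>2" for A B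
    using assms by (simp add: power2_eq_square field_simps)
  then show ?thesis
    unfolding sqdist3_def Wstat_def
    by (simp add: distrib_left sqd_shift ipd_shift ipd_commute[of d zx y] add.assoc)
qed

lemma shift_sqd_term_le:
  fixes t h p q :: real
  assumes "t\<^sup>2 \<le> h\<^sup>2"
  shows "(2 * t * p + t\<^sup>2 * q)\<^sup>2 \<le> 8 * h\<^sup>2 * p\<^sup>2 + 2 * h ^ 4 * q\<^sup>2"
proof -
  have t4: "t ^ 4 \<le> h ^ 4"
    using power_mono[OF assms, of 2] by (simp flip: power_mult)
  have "(2 * t * p + t\<^sup>2 * q)\<^sup>2 \<le> 2 * (2 * t * p)\<^sup>2 + 2 * (t\<^sup>2 * q)\<^sup>2"
    by (rule sq_add_le)
  also have "\<dots> = 8 * t\<^sup>2 * p\<^sup>2 + 2 * t ^ 4 * q\<^sup>2"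
    by (simp add: power_mult_distrib flip: power_mult)
  also have "\<dots> \<le> 8 * h\<^sup>2 * p\<^sup>2 + 2 * h ^ 4 * q\<^sup>2"
    using mult_right_mono[OF assms, of "p\<^sup>2"] mult_right_mono[OF t4, of "q\<^sup>2"] by simp
  finally show ?thesis .
qed

lemma shift_ipd_term_le:
  fixes s t h p p' r :: real
  assumes "s\<^sup>2 \<le> h\<^sup>2" and "t\<^sup>2 \<le> h\<^sup>2"
  shows "(t * p + s * p' + s * t * r)\<^sup>2 \<le> 3 * h\<^sup>2 * p\<^sup>2 + 3 * h\<^sup>2 * p'\<^sup>2 + 3 * h ^ 4 * r\<^sup>2"
proof -
  have st: "s\<^sup>2 * t\<^sup>2 \<le> h ^ 4"
    using mult_mono[OF assms] by (simp add: power_numeral_reduce)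
  have "(t * p + s * p' + s * t * r)\<^sup>2 \<le> 3 * (t * p)\<^sup>2 + 3 * (s * p')\<^sup>2 + 3 * (s * t * r)\<^sup>2"
    by (rule sq_add3_le)
  also have "\<dots> = 3 * t\<^sup>2 * p\<^sup>2 + 3 * s\<^sup>2 * p'\<^sup>2 + 3 * (s\<^sup>2 * t\<^sup>2) * r\<^sup>2"
    by (simp add: power_mult_distrib)
  also have "\<dots> \<le> 3 * h\<^sup>2 * p\<^sup>2 + 3 * h\<^sup>2 * p'\<^sup>2 + 3 * h ^ 4 * r\<^sup>2"
    using mult_right_mono[OF assms(2), of "p\<^sup>2"] mult_right_mono[OF assms(1), of "p'\<^sup>2"]
      mult_right_mono[OF st, of "r\<^sup>2"] by simp
  finally show ?thesis .
qed

lemma sqdist3_Wstat_shift_le: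
  assumes "0 < d" and "s\<^sup>2 \<le> h\<^sup>2" and "t\<^sup>2 \<le> h\<^sup>2"
  shows "(real d)\<^sup>2 * sqdist3 (Wstat d (\<lambda>i. x i + s * zx i) (\<lambda>i. y i + t * zy i)) (Wstat d x y) \<le>
    8 * h\<^sup>2 * ((ipd d x zx)\<^sup>2 + (ipd d y zy)\<^sup>2 + (ipd d x zy)\<^sup>2 + (ipd d y zx)\<^sup>2) +
    4 * h ^ 4 * ((sqd d zx)\<^sup>2 + (sqd d zy)\<^sup>2)"
proof -
  have "(ipd d zx zy)\<^sup>2 \<le> ((sqd d zx)\<^sup>2 + (sqd d zy)\<^sup>2) / 2"
  proof -
    have "sqd d zx * sqd d zy \<le> ((sqd d zx)\<^sup>2 + (sqd d zy)\<^sup>2) / 2"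
      using zero_le_power2[of "sqd d zx - sqd d zy"] by (simp add: power2_eq_square algebra_simps)
    then show ?thesis
      using ipd_sq_le_sqd_mult[of d zx zy] by linarith
  qed
  then have "3 * h ^ 4 * (ipd d zx zy)\<^sup>2 \<le> 3 * h ^ 4 * (((sqd d zx)\<^sup>2 + (sqd d zy)\<^sup>2) / 2)"
    by (intro mult_left_mono) auto
  moreover have "0 \<le> h\<^sup>2 * (ipd d x zy)\<^sup>2" "0 \<le> h\<^sup>2 * (ipd d y zx)\<^sup>2"
    "0 \<le> h ^ 4 * (sqd d zx)\<^sup>2" "0 \<le> h ^ 4 * (sqd d zy)\<^sup>2"
    by simp_all
  ultimately show ?thesis
    unfolding sqdist3_Wstat_shift[OF assms(1)]
    using shift_sqd_term_le[OF assms(2), of "ipd d x zx" "sqd d zx"]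
      shift_sqd_term_le[OF assms(3), of "ipd d y zy" "sqd d zy"]
      shift_ipd_term_le[OF assms(2,3), of "ipd d x zy" "ipd d y zx" "ipd d zx zy"]
    by (simp only: distrib_left add_divide_distrib)
qed

section \<open>Gaussian moments\<close>

abbreviation std_normal :: "real measure" where
  "std_normal \<equiv> density lborel std_normal_density"

abbreviation std_gaussian :: "nat \<Rightarrow> (nat \<Rightarrow> real) measure" where
  "std_gaussian d \<equiv> PiM {..<d} (\<lambda>_. std_normal)"

definition std_normal_moment :: "nat \<Rightarrow> real" where
  "std_normal_moment k = integral\<^sup>L lborel (\<lambda>x. std_normal_density x * x ^ k)"

lemma prob_space_std_normal: "prob_space std_normal"
  by (rule prob_space_normal_density) simp

lemma prob_space_std_gaussian: "prob_space (std_gaussian d)"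
  by (rule prob_space_PiM) (rule prob_space_std_normal)

lemma has_bochner_integral_std_normal_power:
  "has_bochner_integral std_normal (\<lambda>x. x ^ k) (std_normal_moment k)"
  unfolding std_normal_moment_def
  by (rule has_bochner_integral_density)
    (auto simp: normal_density_nonneg intro!: has_bochner_integral_integrable integrable_std_normal_moment)

lemma std_normal_moment_values:
  "std_normal_moment 0 = 1" "std_normal_moment 1 = 0" "std_normal_moment 2 = 1" "std_normal_moment 4 = 3"
proof -
  show "std_normal_moment 0 = 1"
    using integral_std_normal_moment_even[of 0] by (simp add: std_normal_moment_def)
  show "std_normal_moment 1 = 0"
    using integral_std_normal_moment_odd[of 0] by (simp add: std_normal_moment_def)
  show "std_normal_moment 2 = 1"
    using integral_std_normal_moment_even[of 1] by (simp add: std_normal_moment_def)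
  have "fact 4 = (24::real)"
    by (simp add: fact_numeral)
  then show "std_normal_moment 4 = 3"
    using integral_std_normal_moment_even[of 2] by (simp add: std_normal_moment_def)
qed

lemma prod_if_eq_two_points:
  assumes "finite S" and "i \<in> S" and "j \<in> S"
  shows "(\<Prod>k\<in>S. if k = i \<and> k = j then a else if k = i then b else if k = j then c else 1) =
    (if i = j then a else b * c)"
proof (cases "i = j")
  case True
  then have "(\<Prod>k\<in>S. if k = i \<and> k = j then a else if k = i then b else if k = j then c else 1) =
      (\<Prod>k\<in>S. if k = i then a else 1)"
    by (intro prod.cong) auto
  then show ?thesis
    using assms True by (simp add: prod.delta)
next
  case False
  then have "(\<Prod>k\<in>S. if k = i \<and> k = j then a else if k = i then b else if k = j then c else 1) =
      (\<Prod>k\<in>S. (if k = i then b else 1) * (if k = j then c else 1))"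
    by (intro prod.cong) auto
  then show ?thesis
    unfolding prod.distrib using assms False by (simp add: prod.delta)
qed

lemma has_bochner_integral_std_gaussian_monomial:
  assumes "i < d" and "j < d"
  shows "has_bochner_integral (std_gaussian d) (\<lambda>z. z i ^ p * z j ^ q)
    (if i = j then std_normal_moment (p + q) else std_normal_moment p * std_normal_moment q)"
proof -
  interpret product_prob_space "\<lambda>_. std_normal" "{..<d}"
    by (auto simp: product_prob_space_def product_sigma_finite_def prob_space_std_normal
        prob_space_imp_sigma_finite product_prob_space_axioms_def)
  define f where "f k t = t ^ ((if k = i then p else 0) + (if k = j then q else 0))" for k and t :: real
  have f_integrable: "integrable std_normal (f k)" for k
    unfolding f_def using has_bochner_integral_std_normal_power by (rule integrable.intros)
  have prod_f: "(\<Prod>k\<in>{..<d}. f k (z k)) = z i ^ p * z j ^ q" for z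
  proof -
    have "t ^ (if b then n else 0) = (if b then t ^ n else 1)" for t :: real and b n
      by simp
    then show ?thesis
      unfolding f_def power_add prod.distrib using assms by (simp add: prod.delta)
  qed
  have integral_f: "integral\<^sup>L std_normal (f k) =
    (if k = i \<and> k = j then std_normal_moment (p + q) else if k = i then std_normal_moment p
     else if k = j then std_normal_moment q else 1)" for k
    unfolding f_def
    using has_bochner_integral_std_normal_power[of "p + q"] has_bochner_integral_std_normal_power[of p]
      has_bochner_integral_std_normal_power[of q] has_bochner_integral_std_normal_power[of 0]
      std_normal_moment_values(1)
    by (auto simp: has_bochner_integral_iff)
  have "integrable (std_gaussian d) (\<lambda>z. z i ^ p * z j ^ q)"
    using product_integrable_prod[of "{..<d}" f] f_integrable prod_f by simp
  moreover have "integral\<^sup>L (std_gaussian d) (\<lambda>z. z i ^ p * z j ^ q) =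
    (\<Prod>k\<in>{..<d}. integral\<^sup>L std_normal (f k))"
    using product_integral_prod[of "{..<d}" f] f_integrable prod_f by simp
  moreover have "(\<Prod>k\<in>{..<d}. integral\<^sup>L std_normal (f k)) =
    (if i = j then std_normal_moment (p + q) else std_normal_moment p * std_normal_moment q)"
    unfolding integral_f using assms by (intro prod_if_eq_two_points) auto
  ultimately show ?thesis
    by (simp add: has_bochner_integral_iff)
qed

lemma has_bochner_integral_std_gaussian_ipd_sq:
  "has_bochner_integral (std_gaussian d) (\<lambda>z. (ipd d b z)\<^sup>2) (sqd d b)"
proof -
  have "has_bochner_integral (std_gaussian d) (\<lambda>z. \<Sum>i<d. \<Sum>j<d. b i * b j * (z i ^ 1 * z j ^ 1))
    (\<Sum>i<d. \<Sum>j<d. b i * b j *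
       (if i = j then std_normal_moment (1 + 1) else std_normal_moment 1 * std_normal_moment 1))"
    by (intro has_bochner_integral_sum has_bochner_integral_mult_right has_bochner_integral_std_gaussian_monomial)
      auto
  moreover have "(\<lambda>z. \<Sum>i<d. \<Sum>j<d. b i * b j * (z i ^ 1 * z j ^ 1)) = (\<lambda>z. (ipd d b z)\<^sup>2)"
    by (simp add: ipd_def power2_eq_square sum_product algebra_simps)
  moreover have "(\<Sum>i<d. \<Sum>j<d. b i * b j *
       (if i = j then std_normal_moment (1 + 1) else std_normal_moment 1 * std_normal_moment 1)) = sqd d b"
    using std_normal_moment_values
    by (simp add: sqd_def ipd_def numeral_2_eq_2[symmetric] if_distrib sum.delta cong: if_cong)
  ultimately show ?thesis
    by simp
qed

lemma has_bochner_integral_std_gaussian_sqd_sq: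
  "has_bochner_integral (std_gaussian d) (\<lambda>z. (sqd d z)\<^sup>2) ((real d)\<^sup>2 + 2 * real d)"
proof -
  have "has_bochner_integral (std_gaussian d) (\<lambda>z. \<Sum>i<d. \<Sum>j<d. z i ^ 2 * z j ^ 2)
    (\<Sum>i<d. \<Sum>j<d. if i = j then std_normal_moment (2 + 2) else std_normal_moment 2 * std_normal_moment 2)"
    by (intro has_bochner_integral_sum has_bochner_integral_std_gaussian_monomial) auto
  moreover have "(\<lambda>z. \<Sum>i<d. \<Sum>j<d. z i ^ 2 * z j ^ 2) = (\<lambda>z. (sqd d z)\<^sup>2)"
    by (simp add: sqd_def ipd_def power2_eq_square sum_product)
  moreover have "(\<Sum>i<d. \<Sum>j<d.
      if i = j then std_normal_moment (2 + 2) else std_normal_moment 2 * std_normal_moment 2) =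
    (\<Sum>i<d. \<Sum>j<d. 1 + (if j = i then 2 else 0 :: real))"
    using std_normal_moment_values by (intro sum.cong) auto
  moreover have "\<dots> = (real d)\<^sup>2 + 2 * real d"
    by (simp add: sum.distrib sum.delta power2_eq_square algebra_simps)
  ultimately show ?thesis
    by simp
qed

lemma nn_integral_pair_fst:
  assumes "prob_space M2" and [measurable]: "F \<in> borel_measurable M1"
  shows "(\<integral>\<^sup>+ \<omega>. F (fst \<omega>) \<partial>(M1 \<Otimes>\<^sub>M M2)) = integral\<^sup>N M1 F"
proof -
  have "integral\<^sup>N M1 F = integral\<^sup>N (distr (M1 \<Otimes>\<^sub>M M2) M1 fst) F"
    by (simp add: prob_space.distr_pair_fst[OF assms(1)])
  also have "\<dots> = (\<integral>\<^sup>+ \<omega>. F (fst \<omega>) \<partial>(M1 \<Otimes>\<^sub>M M2))"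
    by (rule nn_integral_distr) measurable
  finally show ?thesis ..
qed

lemma nn_integral_pair_snd:
  assumes "prob_space M1" and "sigma_finite_measure M2" and [measurable]: "G \<in> borel_measurable M2"
  shows "(\<integral>\<^sup>+ \<omega>. G (snd \<omega>) \<partial>(M1 \<Otimes>\<^sub>M M2)) = integral\<^sup>N M2 G"
proof -
  interpret M1: prob_space M1 by fact
  interpret pair_sigma_finite M1 M2
    by (simp add: assms(2) pair_sigma_finite_def prob_space_imp_sigma_finite M1.prob_space_axioms)
  have "(\<integral>\<^sup>+ \<omega>. G (snd \<omega>) \<partial>(M1 \<Otimes>\<^sub>M M2)) = (\<integral>\<^sup>+ y. \<integral>\<^sup>+ x. G (snd (x, y)) \<partial>M1 \<partial>M2)"
    by (rule nn_integral_snd[symmetric]) measurable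
  also have "\<dots> = integral\<^sup>N M2 G"
    by (simp add: M1.emeasure_space_1)
  finally show ?thesis .
qed

lemma nn_integral_noise_measure_le:
  assumes bound: "\<And>z z1 u. f (z, z1, u) \<le> F z + G z1"
    and F: "has_bochner_integral (std_gaussian d) F IF" and G: "has_bochner_integral std_normal G IG"
    and F_nonneg: "\<And>z. 0 \<le> F z" and G_nonneg: "\<And>t. 0 \<le> G t"
  shows "(\<integral>\<^sup>+ \<omega>. ennreal (f \<omega>) \<partial>noise_measure d) \<le> ennreal (IF + IG)"
proof -
  have [measurable]: "F \<in> borel_measurable (std_gaussian d)" "G \<in> borel_measurable borel"
    using F G by (auto dest: borel_measurable_has_bochner_integral)
  have prob_NU: "prob_space (std_normal \<Otimes>\<^sub>M uniform_measure lborel {0..1::real})"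
    by (intro prob_space_pair prob_space_std_normal prob_space_uniform_measure) auto
  have "(\<integral>\<^sup>+ \<omega>. ennreal (f \<omega>) \<partial>noise_measure d) \<le>
      (\<integral>\<^sup>+ \<omega>. ennreal (F (fst \<omega>)) + ennreal (G (fst (snd \<omega>))) \<partial>noise_measure d)"
    using bound by (intro nn_integral_mono) (auto simp: F_nonneg G_nonneg simp flip: ennreal_plus)
  also have "\<dots> = (\<integral>\<^sup>+ \<omega>. ennreal (F (fst \<omega>)) \<partial>noise_measure d) +
      (\<integral>\<^sup>+ \<omega>. ennreal (G (fst (snd \<omega>))) \<partial>noise_measure d)"
    unfolding noise_measure_def by (rule nn_integral_add) measurable
  also have "\<dots> = (\<integral>\<^sup>+ z. ennreal (F z) \<partial>std_gaussian d) + (\<integral>\<^sup>+ t. ennreal (G t) \<partial>std_normal)"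
  proof -
    have "(\<integral>\<^sup>+ \<omega>. ennreal (G (fst (snd \<omega>))) \<partial>noise_measure d) =
        (\<integral>\<^sup>+ v. ennreal (G (fst v)) \<partial>(std_normal \<Otimes>\<^sub>M uniform_measure lborel {0..1::real}))"
      unfolding noise_measure_def
      by (rule nn_integral_pair_snd[OF prob_space_std_gaussian prob_space_imp_sigma_finite[OF prob_NU]])
        measurable
    also have "\<dots> = (\<integral>\<^sup>+ t. ennreal (G t) \<partial>std_normal)"
      by (rule nn_integral_pair_fst) (auto intro: prob_space_uniform_measure)
    moreover have "(\<integral>\<^sup>+ \<omega>. ennreal (F (fst \<omega>)) \<partial>noise_measure d) = (\<integral>\<^sup>+ z. ennreal (F z) \<partial>std_gaussian d)"
      unfolding noise_measure_def by (rule nn_integral_pair_fst[OF prob_NU]) measurable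
    ultimately show ?thesis
      by simp
  qed
  also have "\<dots> = ennreal (IF + IG)"
  proof -
    have "IF = integral\<^sup>L (std_gaussian d) F" "IG = integral\<^sup>L std_normal G"
      using F G by (simp_all add: has_bochner_integral_iff)
    then have "0 \<le> IF" "0 \<le> IG"
      by (simp_all add: F_nonneg G_nonneg)
    then show ?thesis
      using F G F_nonneg G_nonneg by (simp add: nn_integral_eq_integral has_bochner_integral_iff ennreal_plus)
  qed
  finally show ?thesis .
qed

section \<open>The conditional second moment of the increment\<close>

lemma W_incr_sq_le:
  assumes "0 < d"
  obtains b1 b2 b3 b4 where "sqd d b1 + sqd d b2 + sqd d b3 + sqd d b4 \<le> 2 * (sqd d x + sqd d y)"
    and "\<And>z z1 u. (real d)\<^sup>2 * W_incr_sq c h d x y (z, z1, u) \<le>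
      16 * h\<^sup>2 * ((ipd d b1 z)\<^sup>2 + (ipd d b2 z)\<^sup>2 + (ipd d b3 z)\<^sup>2 + (ipd d b4 z)\<^sup>2) +
      64 * h ^ 4 * (sqd d z)\<^sup>2 + 32 * h\<^sup>2 * (sqd d x + sqd d y) * z1\<^sup>2 + 64 * h ^ 4 * z1 ^ 4"
proof -
  obtain b1 b2 b3 b4 where b: "sqd d b1 + sqd d b2 + sqd d b3 + sqd d b4 \<le> 2 * (sqd d x + sqd d y)"
    and ipd_bound: "\<And>z z1. (ipd d x (fst (noises c d x y z z1)))\<^sup>2 + (ipd d y (snd (noises c d x y z z1)))\<^sup>2 +
      (ipd d x (snd (noises c d x y z z1)))\<^sup>2 + (ipd d y (fst (noises c d x y z z1)))\<^sup>2 \<le>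
      2 * ((ipd d b1 z)\<^sup>2 + (ipd d b2 z)\<^sup>2 + (ipd d b3 z)\<^sup>2 + (ipd d b4 z)\<^sup>2) +
      4 * (sqd d x + sqd d y) * z1\<^sup>2"
    using noises_ipd_sq_le by blast
  show ?thesis
  proof (rule that[OF b])
    fix z z1 u
    define zx zy where "zx = fst (noises c d x y z z1)" and "zy = snd (noises c d x y z z1)"
    obtain s t where s: "s\<^sup>2 \<le> h\<^sup>2" and t: "t\<^sup>2 \<le> h\<^sup>2"
      and W: "W_incr_sq c h d x y (z, z1, u) =
        sqdist3 (Wstat d (\<lambda>i. x i + s * zx i) (\<lambda>i. y i + t * zy i)) (Wstat d x y)"
      unfolding zx_def zy_def by (rule W_incr_sq_eq_shift)
    have "(sqd d zx)\<^sup>2 + (sqd d zy)\<^sup>2 \<le> 16 * (sqd d z)\<^sup>2 + 16 * z1 ^ 4"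
      using add_mono[OF contractive_noise_sqd_sq_le[OF contractive_noises(1)[of d c x y], of z z1]
          contractive_noise_sqd_sq_le[OF contractive_noises(2)[of d c x y], of z z1]]
      unfolding zx_def zy_def by simp
    with ipd_bound[of z z1, folded zx_def zy_def]
    have "8 * h\<^sup>2 * ((ipd d x zx)\<^sup>2 + (ipd d y zy)\<^sup>2 + (ipd d x zy)\<^sup>2 + (ipd d y zx)\<^sup>2) +
        4 * h ^ 4 * ((sqd d zx)\<^sup>2 + (sqd d zy)\<^sup>2) \<le>
      8 * h\<^sup>2 * (2 * ((ipd d b1 z)\<^sup>2 + (ipd d b2 z)\<^sup>2 + (ipd d b3 z)\<^sup>2 + (ipd d b4 z)\<^sup>2) +
        4 * (sqd d x + sqd d y) * z1\<^sup>2) + 4 * h ^ 4 * (16 * (sqd d z)\<^sup>2 + 16 * z1 ^ 4)"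
      by (intro add_mono[OF mult_left_mono mult_left_mono]) simp_all
    then show "(real d)\<^sup>2 * W_incr_sq c h d x y (z, z1, u) \<le>
      16 * h\<^sup>2 * ((ipd d b1 z)\<^sup>2 + (ipd d b2 z)\<^sup>2 + (ipd d b3 z)\<^sup>2 + (ipd d b4 z)\<^sup>2) +
      64 * h ^ 4 * (sqd d z)\<^sup>2 + 32 * h\<^sup>2 * (sqd d x + sqd d y) * z1\<^sup>2 + 64 * h ^ 4 * z1 ^ 4"
      using sqdist3_Wstat_shift_le[OF assms s t, of x zx y zy] unfolding W by (simp add: algebra_simps)
  qed
qed

lemma nn_integral_W_incr_sq_le:
  assumes "0 < d"
  shows "(\<integral>\<^sup>+ \<omega>. ennreal (W_incr_sq c h d x y \<omega>) \<partial>noise_measure d) \<le>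
    ennreal ((64 * h\<^sup>2 * (sqd d x + sqd d y) + 64 * h ^ 4 * ((real d)\<^sup>2 + 2 * real d + 3)) / (real d)\<^sup>2)"
proof -
  obtain b1 b2 b3 b4 where b: "sqd d b1 + sqd d b2 + sqd d b3 + sqd d b4 \<le> 2 * (sqd d x + sqd d y)"
    and bound: "\<And>z z1 u. (real d)\<^sup>2 * W_incr_sq c h d x y (z, z1, u) \<le>
      16 * h\<^sup>2 * ((ipd d b1 z)\<^sup>2 + (ipd d b2 z)\<^sup>2 + (ipd d b3 z)\<^sup>2 + (ipd d b4 z)\<^sup>2) +
      64 * h ^ 4 * (sqd d z)\<^sup>2 + 32 * h\<^sup>2 * (sqd d x + sqd d y) * z1\<^sup>2 + 64 * h ^ 4 * z1 ^ 4"
    using W_incr_sq_le[OF assms] by blast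
  define D where "D = (real d)\<^sup>2"
  have D: "0 < D"
    using assms by (simp add: D_def)
  define F where "F z = 16 * h\<^sup>2 * ((ipd d b1 z)\<^sup>2 + (ipd d b2 z)\<^sup>2 + (ipd d b3 z)\<^sup>2 + (ipd d b4 z)\<^sup>2) +
    64 * h ^ 4 * (sqd d z)\<^sup>2" for z
  define G where "G t = 32 * h\<^sup>2 * (sqd d x + sqd d y) * t\<^sup>2 + 64 * h ^ 4 * t ^ 4" for t :: real
  have F: "has_bochner_integral (std_gaussian d) F
      (16 * h\<^sup>2 * (sqd d b1 + sqd d b2 + sqd d b3 + sqd d b4) + 64 * h ^ 4 * ((real d)\<^sup>2 + 2 * real d))"
    unfolding F_def
    by (intro has_bochner_integral_add has_bochner_integral_mult_right
        has_bochner_integral_std_gaussian_ipd_sq has_bochner_integral_std_gaussian_sqd_sq)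
  have "has_bochner_integral std_normal G
      (32 * h\<^sup>2 * (sqd d x + sqd d y) * std_normal_moment 2 + 64 * h ^ 4 * std_normal_moment 4)"
    unfolding G_def
    by (intro has_bochner_integral_add has_bochner_integral_mult_right has_bochner_integral_std_normal_power)
  then have G: "has_bochner_integral std_normal G (32 * h\<^sup>2 * (sqd d x + sqd d y) + 192 * h ^ 4)"
    by (simp add: std_normal_moment_values)
  have "(\<integral>\<^sup>+ \<omega>. ennreal (W_incr_sq c h d x y \<omega>) \<partial>noise_measure d) \<le>
    ennreal ((16 * h\<^sup>2 * (sqd d b1 + sqd d b2 + sqd d b3 + sqd d b4) + 64 * h ^ 4 * ((real d)\<^sup>2 + 2 * real d)) / D +
      (32 * h\<^sup>2 * (sqd d x + sqd d y) + 192 * h ^ 4) / D)"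
  proof (rule nn_integral_noise_measure_le[OF _ has_bochner_integral_divide_zero[OF F]
        has_bochner_integral_divide_zero[OF G]])
    show "W_incr_sq c h d x y (z, z1, u) \<le> F z / D + G z1 / D" for z z1 u
      using bound[of z z1 u, folded D_def] D
      unfolding F_def G_def add_divide_distrib[symmetric] by (simp add: pos_le_divide_eq algebra_simps)
    show "0 \<le> F z / D" "0 \<le> G t / D" for z t
      unfolding F_def G_def using D by (auto intro!: divide_nonneg_pos simp: sqd_nonneg)
  qed
  also have "\<dots> \<le> ennreal ((64 * h\<^sup>2 * (sqd d x + sqd d y) + 64 * h ^ 4 * ((real d)\<^sup>2 + 2 * real d + 3)) / D)"
    unfolding add_divide_distrib[symmetric]
    using mult_left_mono[OF b, of "16 * h\<^sup>2"] D
    by (intro ennreal_leI divide_right_mono) (simp_all add: algebra_simps)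
  finally show ?thesis
    unfolding D_def .
qed

lemma cond_incr_mult_le:
  assumes "0 < d"
  shows "cond_incr c l d x y * ennreal ((real d)\<^sup>2) \<le>
    ennreal (64 * l\<^sup>2 * (sqd d x + sqd d y) / real d + 384 * l ^ 4)"
proof -
  define h where "h = l / sqrt (real d)"
  have h2: "h\<^sup>2 = l\<^sup>2 / real d"
    by (simp add: h_def power_divide)
  have h4: "h ^ 4 = l ^ 4 / (real d)\<^sup>2"
  proof -
    have "h ^ 4 = (h\<^sup>2)\<^sup>2"
      by (simp flip: power_mult)
    then show ?thesis
      by (simp add: h2 power_divide flip: power_mult)
  qed
  have "cond_incr c l d x y * ennreal ((real d)\<^sup>2) \<le>
    ennreal ((64 * h\<^sup>2 * (sqd d x + sqd d y) + 64 * h ^ 4 * ((real d)\<^sup>2 + 2 * real d + 3)) / (real d)\<^sup>2) *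
    ennreal ((real d)\<^sup>2)"
    unfolding cond_incr_def h_def[symmetric]
    by (intro mult_right_mono nn_integral_W_incr_sq_le[OF assms]) simp
  also have "\<dots> = ennreal (64 * h\<^sup>2 * (sqd d x + sqd d y) + 64 * h ^ 4 * ((real d)\<^sup>2 + 2 * real d + 3))"
    using assms by (simp flip: ennreal_mult'')
  also have "\<dots> \<le> ennreal (64 * l\<^sup>2 * (sqd d x + sqd d y) / real d + 384 * l ^ 4)"
  proof (rule ennreal_leI)
    have "1 \<le> real d"
      using assms by simp
    then have "real d \<le> (real d)\<^sup>2"
      by (simp add: power2_eq_square)
    with \<open>1 \<le> real d\<close> have "(real d)\<^sup>2 + 2 * real d + 3 \<le> 6 * (real d)\<^sup>2"
      by linarith
    then have "l ^ 4 * ((real d)\<^sup>2 + 2 * real d + 3) \<le> l ^ 4 * (6 * (real d)\<^sup>2)"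
      by (rule mult_left_mono) simp
    then have "l ^ 4 * ((real d)\<^sup>2 + 2 * real d + 3) / (real d)\<^sup>2 \<le> 6 * l ^ 4"
      using assms by (simp add: pos_divide_le_eq ac_simps)
    then show "64 * h\<^sup>2 * (sqd d x + sqd d y) + 64 * h ^ 4 * ((real d)\<^sup>2 + 2 * real d + 3) \<le>
      64 * l\<^sup>2 * (sqd d x + sqd d y) / real d + 384 * l ^ 4"
      unfolding h2 h4 by simp
  qed
  finally show ?thesis .
qed

theorem proposition2:
  fixes c :: coupling and l X Y :: real
  assumes "l > 0" and "X > 0" and "Y > 0"
  shows "limsup (\<lambda>d::nat. (SUP xy \<in> {(x, y). Wstat d x y \<in> Sset X Y}.
            cond_incr c l d (fst xy) (snd xy)) * ennreal ((real d)\<^sup>2)) < \<infinity>"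
proof -
  \<comment> \<open>The bound holds for all l, X, Y.\<close>
  define K where "K = 64 * l\<^sup>2 * (X + Y) + 384 * l ^ 4"
  have "(SUP xy \<in> {(x, y). Wstat d x y \<in> Sset X Y}. cond_incr c l d (fst xy) (snd xy)) *
      ennreal ((real d)\<^sup>2) \<le> ennreal K" if "0 < d" for d
    unfolding SUP_mult_right_ennreal
  proof (rule SUP_least, clarify)
    fix x y assume "Wstat d x y \<in> Sset X Y"
    then have "sqd d x / real d \<le> X" "sqd d y / real d \<le> Y"
      by (auto simp: Wstat_def Sset_def)
    then have "64 * l\<^sup>2 * (sqd d x + sqd d y) / real d \<le> 64 * l\<^sup>2 * (X + Y)"
      by (simp add: add_divide_distrib mult_left_mono flip: times_divide_eq_right)
    with cond_incr_mult_le[OF that, of c l x y]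
    show "cond_incr c l d (fst (x, y)) (snd (x, y)) * ennreal ((real d)\<^sup>2) \<le> ennreal K"
      unfolding K_def by (auto elim!: order_trans intro!: ennreal_leI)
  qed
  then have "limsup (\<lambda>d::nat. (SUP xy \<in> {(x, y). Wstat d x y \<in> Sset X Y}.
      cond_incr c l d (fst xy) (snd xy)) * ennreal ((real d)\<^sup>2)) \<le> ennreal K"
    by (intro Limsup_bounded eventually_mono[OF eventually_gt_at_top[of 0]])
  then show ?thesis
    by (simp add: le_less_trans)
qed

end
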